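(* On $\mathbb R^4$ with coordinates $(q_1,p_1,q_2,p_2)$ and $\omega=dp_1\wedge dq_1+dp_2\wedge dq_2$, let $H=q_1q_2-p_1p_2$, $J=\tfrac12(q_1^2+p_1^2)-\tfrac12(q_2^2+p_2^2)$, let $B=\{q_1^2+q_2^2+p_1^2+p_2^2<2r\}$ for fixed $r>0$, and take the rotation 1-form $\vartheta=d\theta_1=\dfrac{p_1\,dq_1-q_1\,dp_1}{q_1^2+p_1^2}$ on $B\setminus\{q_1=p_1=0\}$. Let $\Gamma(s)=(j(s),h(s))=(\ell\cos s,\ell\sin s)$, $s\in[0,2\pi]$, with $\ell>0$ sufficiently small. Then $\operatorname{var}_\Gamma\Phi_{\mathrm{rel}}=2\pi$, and hence the monodromy number is $k=-1$.
   Context: $X_H,X_J$ are the Hamiltonian vector fields; the flow of $X_J$ is $2\pi$-periodic. For $(j,h)\neq(0,0)$ small, $F^{-1}(j,h)\cap\overline B$ is a cylinder whose boundary consists of two $X_J$-orbits $S_-,S_+$, with the flow of $X_H$ carrying $S_-$ to $S_+$. $\Phi_{\mathrm{rel}}(j,h)=\int\vartheta$ over the portion inside $B$ of an $X_H$-orbit in $F^{-1}(j,h)$, from $S_-$ to $S_+$ (independent of the orbit). Variation: for $g:\Gamma\to\mathbb R$ with finitely many jumps $d_j=\lim_{\varepsilon\to0^+}(g(p_j+\varepsilon)-g(p_j-\varepsilon))$ along increasing $s$, $\operatorname{var}_\Gamma g=-\sum_jd_j$. Monodromy number $k$ of the torus bundle over $\Gamma$ (for any integrable system that agrees with this local model near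 a focus-focus point with singly pinched compact fiber) is related by $\operatorname{var}_\Gamma\Phi_{\mathrm{rel}}=-2\pi k$. *)

theory Defs
  imports "HOL-Analysis.Analysis"
begin

text \<open>Points of R^4 are tuples (q1, p1, q2, p2).\<close>
type_synonym R4 = "real \<times> real \<times> real \<times> real"

text \<open>Hamiltonian vector field for omega = dp1 wedge dq1 + dp2 wedge dq2, with the
  convention (iota of X_f) omega = - df, i.e. q' = df/dp, p' = - df/dq.\<close>
definition ham_vf :: "(R4 \<Rightarrow> real) \<Rightarrow> R4 \<Rightarrow> R4" where
  "ham_vf f x = (case x of (q1, p1, q2, p2) \<Rightarrow>
     ( deriv (\<lambda>t. f (q1, t, q2, p2)) p1,
      - deriv (\<lambda>t. f (t, p1, q2, p2)) q1,
       deriv (\<lambda>t. f (q1, p1, q2, t)) p2,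
      - deriv (\<lambda>t. f (q1, p1, t, p2)) q2))"

definition H :: "R4 \<Rightarrow> real" where
  "H x = (case x of (q1, p1, q2, p2) \<Rightarrow> q1 * q2 - p1 * p2)"

definition J :: "R4 \<Rightarrow> real" where
  "J x = (case x of (q1, p1, q2, p2) \<Rightarrow> (q1\<^sup>2 + p1\<^sup>2) / 2 - (q2\<^sup>2 + p2\<^sup>2) / 2)"

definition F :: "R4 \<Rightarrow> real \<times> real" where
  "F x = (J x, H x)"

definition sqnorm4 :: "R4 \<Rightarrow> real" where
  "sqnorm4 x = (case x of (q1, p1, q2, p2) \<Rightarrow> q1\<^sup>2 + q2\<^sup>2 + p1\<^sup>2 + p2\<^sup>2)"

definition ballB :: "real \<Rightarrow> R4 set" where
  "ballB r = {x. sqnorm4 x < 2 * r}"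

definition theta :: "R4 \<Rightarrow> R4 \<Rightarrow> real" where
  "theta x v = (case x of (q1, p1, q2, p2) \<Rightarrow> case v of (vq1, vp1, vq2, vp2) \<Rightarrow>
     (p1 * vq1 - q1 * vp1) / (q1\<^sup>2 + p1\<^sup>2))"

definition XH_orbit :: "(real \<Rightarrow> R4) \<Rightarrow> bool" where
  "XH_orbit \<gamma> \<longleftrightarrow> (\<forall>t. (\<gamma> has_vector_derivative ham_vf H (\<gamma> t)) (at t))"

definition Phi_rel :: "real \<Rightarrow> real \<Rightarrow> real \<Rightarrow> real" where
  "Phi_rel r j h = (SOME c. \<exists>\<gamma> t0 t1.
      XH_orbit \<gamma> \<and> (\<forall>t. F (\<gamma> t) = (j, h)) \<and> t0 < t1 \<and>
      sqnorm4 (\<gamma> t0) = 2 * r \<and> sqnorm4 (\<gamma> t1) = 2 * r \<and>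
      (\<forall>t\<in>{t0<..<t1}. \<gamma> t \<in> ballB r) \<and>
      c = integral {t0..t1} (\<lambda>t. theta (\<gamma> t) (vector_derivative \<gamma> (at t))))"

definition Gamma :: "real \<Rightarrow> real \<Rightarrow> real \<times> real" where
  "Gamma l s = (l * cos s, l * sin s)"

definition jump :: "(real \<Rightarrow> real) \<Rightarrow> real \<Rightarrow> real" where
  "jump g p = Lim (at_right 0) (\<lambda>e. g (p + e) - g (p - e))"

text \<open>Jump points of a function g along the closed loop parametrised by s in [0, 2 pi)
  (g is 2pi-periodic, so discontinuity at 0 is the loop discontinuity).\<close>
definition jump_points :: "(real \<Rightarrow> real) \<Rightarrow> real set" where
  "jump_points g = {p \<in> {0..<2 * pi}. \<not> isCont g p}"

definition var_loop :: "(real \<Rightarrow> real) \<Rightarrow> real" where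
  "var_loop g = - (\<Sum>p\<in>jump_points g. jump g p)"

end

theory Submission
  imports Defs
begin

text \<open>Along \<open>X\<^sub>H\<close> the functions \<open>q\<^sub>1 - p\<^sub>2, p\<^sub>1 - q\<^sub>2\<close> grow like \<open>e\<^sup>t\<close> and
  \<open>q\<^sub>1 + p\<^sub>2, p\<^sub>1 + q\<^sub>2\<close> decay like \<open>e\<^sup>-\<^sup>t\<close>. So \<open>W = (q\<^sub>1 - p\<^sub>2)\<^sup>2 + (p\<^sub>1 - q\<^sub>2)\<^sup>2\<close>
  is a time coordinate on every orbit, \<open>W\<close> times its stable counterpart is \<open>4 (j\<^sup>2 + h\<^sup>2)\<close>,
  and the sum of the two is twice the squared norm; hence an orbit in \<open>F\<^sup>-\<^sup>1(j, h)\<close>,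
  \<open>j\<^sup>2 + h\<^sup>2 = l\<^sup>2\<close>, enters \<open>B\<close> at \<open>W = 2r - 2\<surd>(r\<^sup>2 - l\<^sup>2)\<close> and leaves it at
  \<open>W = 2r + 2\<surd>(r\<^sup>2 - l\<^sup>2)\<close>. On the orbit \<open>\<vartheta>(X\<^sub>H) = h / (q\<^sub>1\<^sup>2 + p\<^sub>1\<^sup>2)\<close>, and the identity
  \<open>4 W (q\<^sub>1\<^sup>2 + p\<^sub>1\<^sup>2) = (W + 2j)\<^sup>2 + 4h\<^sup>2\<close> makes \<open>arctan ((W + 2j) / 2h)\<close> an antiderivative,
  so \<open>\<Phi>\<^sub>r\<^sub>e\<^sub>l\<close> is a difference of two arctangents. On the circle \<open>(j, h) = l (cos s, sin s)\<close>
  both arctangents jump where \<open>h = l sin s\<close> changes sign; at \<open>s = 0\<close> their numerators are both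
  positive and the jumps cancel, while at \<open>s = \<pi>\<close> the entry numerator is negative and the
  exit numerator positive, so the jumps add up to \<open>-2\<pi>\<close>.\<close>

lemma ham_vf_H: "ham_vf H (q1, p1, q2, p2) = (- p2, - q2, - p1, - q1)"
proof -
  have "deriv (\<lambda>t. q1 * q2 - t * p2) p1 = - p2"
    by (rule DERIV_imp_deriv) (auto intro!: derivative_eq_intros)
  moreover have "deriv (\<lambda>t. t * q2 - p1 * p2) q1 = q2"
    by (rule DERIV_imp_deriv) (auto intro!: derivative_eq_intros)
  moreover have "deriv (\<lambda>t. q1 * q2 - p1 * t) p2 = - p1"
    by (rule DERIV_imp_deriv) (auto intro!: derivative_eq_intros)
  moreover have "deriv (\<lambda>t. q1 * t - p1 * p2) q2 = q1"
    by (rule DERIV_imp_deriv) (auto intro!: derivative_eq_intros)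
  ultimately show ?thesis by (simp add: ham_vf_def H_def)
qed

lemma theta_ham_vf_H:
  "theta (q1, p1, q2, p2) (ham_vf H (q1, p1, q2, p2)) = H (q1, p1, q2, p2) / (q1\<^sup>2 + p1\<^sup>2)"
  by (simp add: theta_def ham_vf_H H_def algebra_simps)

text \<open>Twice the squared distances to the unstable and the stable plane of the
  focus-focus point at the origin.\<close>

definition Wu :: "R4 \<Rightarrow> real" where
  "Wu x = (case x of (q1, p1, q2, p2) \<Rightarrow> (q1 - p2)\<^sup>2 + (p1 - q2)\<^sup>2)"

definition Ws :: "R4 \<Rightarrow> real" where
  "Ws x = (case x of (q1, p1, q2, p2) \<Rightarrow> (q1 + p2)\<^sup>2 + (p1 + q2)\<^sup>2)"

lemma sqnorm4_eq_Wu_Ws: "2 * sqnorm4 x = Wu x + Ws x"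
  by (cases x) (simp add: sqnorm4_def Wu_def Ws_def power2_eq_square algebra_simps)

lemma Wu_mult_Ws: "Wu x * Ws x = 4 * ((J x)\<^sup>2 + (H x)\<^sup>2)"
  by (cases x) (simp add: Wu_def Ws_def J_def H_def power2_eq_square field_simps)

lemma Wu_mult_radius1:
  "4 * Wu (q1, p1, q2, p2) * (q1\<^sup>2 + p1\<^sup>2)
     = (Wu (q1, p1, q2, p2) + 2 * J (q1, p1, q2, p2))\<^sup>2 + 4 * (H (q1, p1, q2, p2))\<^sup>2"
  by (simp add: Wu_def J_def H_def power2_eq_square field_simps)

lemma Wu_pos:
  assumes "(J x)\<^sup>2 + (H x)\<^sup>2 > 0"
  shows "Wu x > 0"
proof -
  have "Wu x \<ge> 0" "Ws x \<ge> 0" by (cases x; simp add: Wu_def Ws_def)+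
  moreover have "Wu x * Ws x > 0" using assms by (simp add: Wu_mult_Ws)
  ultimately show ?thesis by (metis less_eq_real_def mult_zero_left)
qed

lemma XH_orbit_components:
  assumes "XH_orbit \<gamma>" and \<gamma>: "\<And>t. \<gamma> t = (q1 t, p1 t, q2 t, p2 t)"
  shows "(q1 has_real_derivative - p2 t) (at t)" "(p1 has_real_derivative - q2 t) (at t)"
    "(q2 has_real_derivative - p1 t) (at t)" "(p2 has_real_derivative - q1 t) (at t)"
proof -
  have d: "(\<gamma> has_vector_derivative (- p2 t, - q2 t, - p1 t, - q1 t)) (at t)"
    using assms by (simp add: XH_orbit_def ham_vf_H)
  note d_fst = bounded_linear.has_vector_derivative[OF bounded_linear_fst]
  note d_snd = bounded_linear.has_vector_derivative[OF bounded_linear_snd]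
  show "(q1 has_real_derivative - p2 t) (at t)"
    using d_fst[OF d] by (simp add: \<gamma> has_real_derivative_iff_has_vector_derivative)
  show "(p1 has_real_derivative - q2 t) (at t)"
    using d_fst[OF d_snd[OF d]] by (simp add: \<gamma> has_real_derivative_iff_has_vector_derivative)
  show "(q2 has_real_derivative - p1 t) (at t)"
    using d_fst[OF d_snd[OF d_snd[OF d]]] by (simp add: \<gamma> has_real_derivative_iff_has_vector_derivative)
  show "(p2 has_real_derivative - q1 t) (at t)"
    using d_snd[OF d_snd[OF d_snd[OF d]]] by (simp add: \<gamma> has_real_derivative_iff_has_vector_derivative)
qed

lemma XH_orbit_vector_derivative:
  "XH_orbit \<gamma> \<Longrightarrow> vector_derivative \<gamma> (at t) = ham_vf H (\<gamma> t)"
  unfolding XH_orbit_def by (blast intro: vector_derivative_at)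

lemma XH_orbit_Wu_derivative:
  assumes "XH_orbit \<gamma>"
  shows "((\<lambda>t. Wu (\<gamma> t)) has_real_derivative 2 * Wu (\<gamma> t)) (at t)"
proof -
  define q1 p1 q2 p2 where "q1 t = fst (\<gamma> t)" and "p1 t = fst (snd (\<gamma> t))"
    and "q2 t = fst (snd (snd (\<gamma> t)))" and "p2 t = snd (snd (snd (\<gamma> t)))" for t
  have \<gamma>: "\<gamma> t = (q1 t, p1 t, q2 t, p2 t)" for t
    by (simp add: q1_def p1_def q2_def p2_def)
  note d = XH_orbit_components[OF assms \<gamma>]
  have "((\<lambda>t. (q1 t - p2 t)\<^sup>2 + (p1 t - q2 t)\<^sup>2) has_real_derivative
      2 * ((q1 t - p2 t)\<^sup>2 + (p1 t - q2 t)\<^sup>2)) (at t)"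
    by (auto intro!: derivative_eq_intros d simp: power2_eq_square algebra_simps)
  then show ?thesis
    by (simp add: \<gamma> Wu_def)
qed

lemma theta_along_XH_orbit:
  assumes "XH_orbit \<gamma>" and "F (\<gamma> t) = (j, h)"
  shows "theta (\<gamma> t) (vector_derivative \<gamma> (at t)) = h / ((fst (\<gamma> t))\<^sup>2 + (fst (snd (\<gamma> t)))\<^sup>2)"
  using assms theta_ham_vf_H
  by (cases "\<gamma> t") (simp add: XH_orbit_vector_derivative F_def)

lemma arctan_Wu_XH_orbit_derivative:
  assumes orb: "XH_orbit \<gamma>" and F: "F (\<gamma> t) = (j, h)" and "h \<noteq> 0"
  shows "((\<lambda>t. arctan ((Wu (\<gamma> t) + 2 * j) / (2 * h))) has_real_derivative
           h / ((fst (\<gamma> t))\<^sup>2 + (fst (snd (\<gamma> t)))\<^sup>2)) (at t)"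
proof -
  obtain q1 p1 q2 p2 where \<gamma>: "\<gamma> t = (q1, p1, q2, p2)" by (metis prod.exhaust)
  have JH: "J (\<gamma> t) = j" "H (\<gamma> t) = h" using F by (simp_all add: F_def)
  let ?W = "Wu (\<gamma> t)"
  define \<rho> where "\<rho> = q1\<^sup>2 + p1\<^sup>2"
  have W: "?W > 0" using Wu_pos[of "\<gamma> t"] JH \<open>h \<noteq> 0\<close> by (simp add: add_nonneg_pos)
  have W_\<rho>: "4 * ?W * \<rho> = (?W + 2 * j)\<^sup>2 + 4 * h\<^sup>2"
    using Wu_mult_radius1[of q1 p1 q2 p2] JH by (simp add: \<gamma> \<rho>_def)
  have "4 * ?W * \<rho> > 0"
    using \<open>h \<noteq> 0\<close> by (simp only: W_\<rho>) (simp add: add_nonneg_pos)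
  then have \<rho>_pos: "\<rho> > 0"
    using W by (simp add: zero_less_mult_iff)
  have "1 + ((?W + 2 * j) / (2 * h))\<^sup>2 = ((?W + 2 * j)\<^sup>2 + 4 * h\<^sup>2) / (4 * h\<^sup>2)"
    using \<open>h \<noteq> 0\<close> by (simp add: field_simps power2_eq_square)
  also have "\<dots> = 4 * ?W * \<rho> / (4 * h\<^sup>2)"
    by (simp only: W_\<rho>)
  also have "(2 * ?W / (2 * h)) / \<dots> = h / \<rho>"
    using \<open>h \<noteq> 0\<close> W \<rho>_pos by (simp add: field_simps power2_eq_square)
  finally have "(2 * ?W / (2 * h)) / (1 + ((?W + 2 * j) / (2 * h))\<^sup>2) = h / \<rho>" .
  moreover have "((\<lambda>t. arctan ((Wu (\<gamma> t) + 2 * j) / (2 * h))) has_real_derivative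
      (2 * ?W / (2 * h)) / (1 + ((?W + 2 * j) / (2 * h))\<^sup>2)) (at t)"
    using \<open>h \<noteq> 0\<close> by (auto intro!: derivative_eq_intros XH_orbit_Wu_derivative[OF orb] simp: field_simps)
  ultimately show ?thesis by (simp add: \<gamma> \<rho>_def)
qed

lemma integral_theta_XH_orbit:
  assumes orb: "XH_orbit \<gamma>" and F: "\<And>t. F (\<gamma> t) = (j, h)" and "t0 \<le> t1"
  shows "integral {t0..t1} (\<lambda>t. theta (\<gamma> t) (vector_derivative \<gamma> (at t)))
           = arctan ((Wu (\<gamma> t1) + 2 * j) / (2 * h)) - arctan ((Wu (\<gamma> t0) + 2 * j) / (2 * h))"
proof (cases "h = 0")
  case True
  then show ?thesis by (simp add: theta_along_XH_orbit[OF orb F])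
next
  case False
  have "((\<lambda>t. h / ((fst (\<gamma> t))\<^sup>2 + (fst (snd (\<gamma> t)))\<^sup>2)) has_integral
      arctan ((Wu (\<gamma> t1) + 2 * j) / (2 * h)) - arctan ((Wu (\<gamma> t0) + 2 * j) / (2 * h))) {t0..t1}"
    using \<open>t0 \<le> t1\<close> arctan_Wu_XH_orbit_derivative[OF orb F False]
    by (intro fundamental_theorem_of_calculus)
      (auto simp: has_real_derivative_iff_has_vector_derivative[symmetric] has_field_derivative_at_within)
  then show ?thesis
    by (simp add: theta_along_XH_orbit[OF orb F] integral_unique)
qed

lemma XH_orbit_Wu_strict_mono:
  assumes orb: "XH_orbit \<gamma>" and F: "\<And>t. F (\<gamma> t) = (j, h)" and "j\<^sup>2 + h\<^sup>2 > 0" and "t0 < t1"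
  shows "Wu (\<gamma> t0) < Wu (\<gamma> t1)"
proof (rule DERIV_pos_imp_increasing[OF \<open>t0 < t1\<close>])
  fix t
  have "Wu (\<gamma> t) > 0" using Wu_pos[of "\<gamma> t"] F[of t] \<open>j\<^sup>2 + h\<^sup>2 > 0\<close> by (simp add: F_def)
  then show "\<exists>y. ((\<lambda>t. Wu (\<gamma> t)) has_real_derivative y) (at t) \<and> 0 < y"
    using XH_orbit_Wu_derivative[OF orb] by (intro exI[of _ "2 * Wu (\<gamma> t)"] conjI) auto
qed

text \<open>The roots of \<open>w\<^sup>2 - 4 r w + 4 l\<^sup>2\<close>: the values of \<open>Wu\<close> where an orbit in
  \<open>F\<^sup>-\<^sup>1(j, h)\<close> with \<open>j\<^sup>2 + h\<^sup>2 = l\<^sup>2\<close> enters and leaves \<open>B\<close>.\<close>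

definition W_entry :: "real \<Rightarrow> real \<Rightarrow> real" where
  "W_entry r l = 2 * r - 2 * sqrt (r\<^sup>2 - l\<^sup>2)"

definition W_exit :: "real \<Rightarrow> real \<Rightarrow> real" where
  "W_exit r l = 2 * r + 2 * sqrt (r\<^sup>2 - l\<^sup>2)"

lemma W_entry_exit:
  fixes r l :: real
  assumes "0 < l" "l < r"
  shows "W_entry r l + W_exit r l = 4 * r" "W_entry r l * W_exit r l = 4 * l\<^sup>2"
    and "0 < W_entry r l" "W_entry r l < 2 * l" "2 * l < W_exit r l"
proof -
  define S where "S = sqrt (r\<^sup>2 - l\<^sup>2)"
  have S2: "S\<^sup>2 = r\<^sup>2 - l\<^sup>2" using assms by (simp add: S_def)
  have "0 < S" using assms by (simp add: S_def power_strict_mono)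
  moreover have "S < r" using assms real_sqrt_less_mono[of "r\<^sup>2 - l\<^sup>2" "r\<^sup>2"] by (simp add: S_def)
  moreover have levels: "W_entry r l = 2 * r - 2 * S" "W_exit r l = 2 * r + 2 * S"
    by (simp_all add: W_entry_def W_exit_def S_def)
  ultimately show "W_entry r l + W_exit r l = 4 * r" and prod: "W_entry r l * W_exit r l = 4 * l\<^sup>2"
    and "0 < W_entry r l" and exit: "2 * l < W_exit r l"
    using S2 assms unfolding levels by (simp_all add: algebra_simps power2_eq_square)
  have "W_entry r l * W_exit r l < 2 * l * W_exit r l"
    using prod exit assms by (simp add: power2_eq_square mult_strict_left_mono)
  then show "W_entry r l < 2 * l"
    using exit assms by simp
qed

lemma product_root_identity:
  fixes w z a b :: "'a :: comm_ring"
  assumes "w * z = a * b"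
  shows "(w - a) * (w - b) = w * ((w + z) - (a + b))"
  using assms by (simp add: algebra_simps)

lemma sqnorm4_Wu_iff:
  assumes "(J x)\<^sup>2 + (H x)\<^sup>2 = l\<^sup>2" "0 < l" "l < r"
  shows "sqnorm4 x = 2 * r \<longleftrightarrow> Wu x = W_entry r l \<or> Wu x = W_exit r l"
    and "sqnorm4 x < 2 * r \<longleftrightarrow> W_entry r l < Wu x \<and> Wu x < W_exit r l"
proof -
  have "Wu x > 0" using Wu_pos[of x] assms by simp
  have "Wu x * Ws x = W_entry r l * W_exit r l"
    using Wu_mult_Ws[of x] W_entry_exit[OF assms(2,3)] assms(1) by simp
  then have "(Wu x - W_entry r l) * (Wu x - W_exit r l)
      = Wu x * ((Wu x + Ws x) - (W_entry r l + W_exit r l))"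
    by (rule product_root_identity)
  also have "\<dots> = Wu x * (2 * (sqnorm4 x - 2 * r))"
    using W_entry_exit(1)[OF assms(2,3)] sqnorm4_eq_Wu_Ws[of x] by simp
  finally have roots: "(Wu x - W_entry r l) * (Wu x - W_exit r l) = Wu x * (2 * (sqnorm4 x - 2 * r))" .
  show "sqnorm4 x = 2 * r \<longleftrightarrow> Wu x = W_entry r l \<or> Wu x = W_exit r l"
    using \<open>Wu x > 0\<close> roots by auto
  have "W_entry r l < W_exit r l" using W_entry_exit[OF assms(2,3)] by linarith
  then show "sqnorm4 x < 2 * r \<longleftrightarrow> W_entry r l < Wu x \<and> Wu x < W_exit r l"
    using \<open>Wu x > 0\<close> roots by (smt (verit) mult_less_0_iff zero_less_mult_iff)
qed

lemma exists_XH_orbit_crossing_ballB: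
  assumes jh: "j\<^sup>2 + h\<^sup>2 = l\<^sup>2" and l: "0 < l" "l < r"
  shows "\<exists>\<gamma> t0 t1. XH_orbit \<gamma> \<and> (\<forall>t. F (\<gamma> t) = (j, h)) \<and> t0 < t1 \<and>
      sqnorm4 (\<gamma> t0) = 2 * r \<and> sqnorm4 (\<gamma> t1) = 2 * r \<and> (\<forall>t\<in>{t0<..<t1}. \<gamma> t \<in> ballB r)"
proof -
  text \<open>The orbit with \<open>q\<^sub>1 - p\<^sub>2 = e\<^sup>t\<close> and \<open>p\<^sub>1 = q\<^sub>2\<close>; the other two coordinates are
    then forced by \<open>J = j\<close> and \<open>H = h\<close>.\<close>
  define \<gamma> where "\<gamma> t = ((exp t + 2 * j * exp (- t)) / 2, h * exp (- t), h * exp (- t),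
      j * exp (- t) - exp t / 2)" for t
  have "XH_orbit \<gamma>"
    unfolding XH_orbit_def
  proof
    fix t
    have "(\<gamma> has_vector_derivative (exp t / 2 - j * exp (- t), - h * exp (- t), - h * exp (- t),
        - ((exp t + 2 * j * exp (- t)) / 2))) (at t)"
      unfolding \<gamma>_def[abs_def]
      by (intro has_vector_derivative_Pair;
          subst has_real_derivative_iff_has_vector_derivative[symmetric];
          auto intro!: derivative_eq_intros simp: field_simps)
    then show "(\<gamma> has_vector_derivative ham_vf H (\<gamma> t)) (at t)"
      by (simp add: \<gamma>_def ham_vf_H)
  qed
  moreover have "F (\<gamma> t) = (j, h)" for t
  proof -
    have "exp t * exp (- t) = 1" by (simp add: exp_minus_inverse)
    then show ?thesis
      by (simp add: F_def J_def H_def \<gamma>_def power2_eq_square field_simps)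
  qed
  moreover have Wu_\<gamma>: "Wu (\<gamma> t) = exp (2 * t)" for t
    unfolding exp_double by (simp add: Wu_def \<gamma>_def field_simps)
  moreover have JH: "(J (\<gamma> t))\<^sup>2 + (H (\<gamma> t))\<^sup>2 = l\<^sup>2" for t
    using calculation(2) jh by (simp add: F_def)
  moreover define t0 t1 where "t0 = ln (W_entry r l) / 2" and "t1 = ln (W_exit r l) / 2"
  moreover have "t0 < t1" "Wu (\<gamma> t0) = W_entry r l" "Wu (\<gamma> t1) = W_exit r l"
    using W_entry_exit[OF l] by (simp_all add: Wu_\<gamma> t0_def t1_def)
  moreover have "\<gamma> t \<in> ballB r" if "t \<in> {t0<..<t1}" for t
  proof -
    have "Wu (\<gamma> t0) < Wu (\<gamma> t)" "Wu (\<gamma> t) < Wu (\<gamma> t1)"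
      using that by (simp_all add: Wu_\<gamma>)
    then show ?thesis
      using sqnorm4_Wu_iff(2)[OF JH l] \<open>Wu (\<gamma> t0) = W_entry r l\<close> \<open>Wu (\<gamma> t1) = W_exit r l\<close>
      by (simp add: ballB_def)
  qed
  ultimately show ?thesis
    using sqnorm4_Wu_iff(1)[OF JH l] by blast
qed

text \<open>For \<open>h = 0\<close> both sides vanish: the integrand of \<open>\<vartheta>\<close> along the orbit is
  \<open>h / (q\<^sub>1\<^sup>2 + p\<^sub>1\<^sup>2)\<close>, and \<open>x / 0 = 0\<close> on the right.\<close>
lemma Phi_rel_eq:
  assumes jh: "j\<^sup>2 + h\<^sup>2 = l\<^sup>2" and l: "0 < l" "l < r"
  shows "Phi_rel r j h
    = arctan ((W_exit r l + 2 * j) / (2 * h)) - arctan ((W_entry r l + 2 * j) / (2 * h))"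
proof -
  let ?crossing = "\<lambda>c. \<exists>\<gamma> t0 t1. XH_orbit \<gamma> \<and> (\<forall>t. F (\<gamma> t) = (j, h)) \<and> t0 < t1 \<and>
      sqnorm4 (\<gamma> t0) = 2 * r \<and> sqnorm4 (\<gamma> t1) = 2 * r \<and> (\<forall>t\<in>{t0<..<t1}. \<gamma> t \<in> ballB r) \<and>
      c = integral {t0..t1} (\<lambda>t. theta (\<gamma> t) (vector_derivative \<gamma> (at t)))"
  have "\<exists>c. ?crossing c"
    using exists_XH_orbit_crossing_ballB[OF assms] by blast
  then have "?crossing (SOME c. ?crossing c)"
    by (rule someI_ex)
  then obtain \<gamma> t0 t1 where orb: "XH_orbit \<gamma>" and F: "\<And>t. F (\<gamma> t) = (j, h)" and "t0 < t1"
      and sphere: "sqnorm4 (\<gamma> t0) = 2 * r" "sqnorm4 (\<gamma> t1) = 2 * r"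
      and Phi: "(SOME c. ?crossing c) = integral {t0..t1} (\<lambda>t. theta (\<gamma> t) (vector_derivative \<gamma> (at t)))"
    by blast
  have JH: "(J (\<gamma> t))\<^sup>2 + (H (\<gamma> t))\<^sup>2 = l\<^sup>2" for t
    using F[of t] jh by (simp add: F_def)
  have "Wu (\<gamma> t0) < Wu (\<gamma> t1)"
    using XH_orbit_Wu_strict_mono[OF orb F _ \<open>t0 < t1\<close>] jh l by simp
  then have "Wu (\<gamma> t0) = W_entry r l" "Wu (\<gamma> t1) = W_exit r l"
    using sphere sqnorm4_Wu_iff(1)[OF JH l] W_entry_exit[OF l] by force+
  then show ?thesis
    using Phi integral_theta_XH_orbit[OF orb F] \<open>t0 < t1\<close> by (simp add: Phi_rel_def)
qed

text \<open>No side conditions: for \<open>u = 0\<close> or \<open>y = 0\<close> both sides are \<open>0\<close>, by \<open>x / 0 = 0\<close>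
  and \<open>sgn 0 = 0\<close>.\<close>
lemma arctan_div_swap:
  fixes u y :: real
  shows "arctan (u / y) = sgn u * sgn y * pi / 2 - arctan (y / u)"
proof (cases "u = 0 \<or> y = 0")
  case False
  then have "arctan (1 / (y / u)) = sgn (y / u) * pi / 2 - arctan (y / u)"
    by (intro Transcendental.arctan_inverse) simp
  then show ?thesis
    using False by (simp add: sgn_divide sgn_mult mult.commute)
qed auto

text \<open>With \<open>a = W_exit r l\<close> and \<open>b = W_entry r l\<close> this is \<open>\<Phi>\<^sub>r\<^sub>e\<^sub>l\<close> at
  \<open>l (cos s, sin s)\<close>; at \<open>sin s = 0\<close> it is \<open>0\<close>, again by \<open>x / 0 = 0\<close>.\<close>
definition Phi_circle :: "real \<Rightarrow> real \<Rightarrow> real \<Rightarrow> real \<Rightarrow> real" where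
  "Phi_circle a b l s
     = arctan ((a + 2 * l * cos s) / (2 * l * sin s)) - arctan ((b + 2 * l * cos s) / (2 * l * sin s))"

definition Phi_circle_regular :: "real \<Rightarrow> real \<Rightarrow> real \<Rightarrow> real \<Rightarrow> real" where
  "Phi_circle_regular a b l s
     = arctan (2 * l * sin s / (b + 2 * l * cos s)) - arctan (2 * l * sin s / (a + 2 * l * cos s))"

lemma Phi_circle_split:
  assumes "0 < l"
  shows "Phi_circle a b l s = (sgn (a + 2 * l * cos s) - sgn (b + 2 * l * cos s)) * sgn (sin s) * pi / 2
    + Phi_circle_regular a b l s"
proof -
  have "sgn (2 * l * sin s) = sgn (sin s)"
    using assms by (simp add: sgn_mult)
  then show ?thesis
    using arctan_div_swap[of "a + 2 * l * cos s" "2 * l * sin s"]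
      arctan_div_swap[of "b + 2 * l * cos s" "2 * l * sin s"]
    unfolding Phi_circle_def Phi_circle_regular_def by (simp add: left_diff_distrib diff_divide_distrib)
qed

lemma isCont_Phi_circle_regular:
  "a + 2 * l * cos s \<noteq> 0 \<Longrightarrow> b + 2 * l * cos s \<noteq> 0 \<Longrightarrow> isCont (Phi_circle_regular a b l) s"
  unfolding Phi_circle_regular_def[abs_def] by (intro continuous_intros) auto

lemma isCont_Phi_circle:
  "0 < l \<Longrightarrow> sin s \<noteq> 0 \<Longrightarrow> isCont (Phi_circle a b l) s"
  unfolding Phi_circle_def[abs_def] by (intro continuous_intros) auto

lemma isCont_Phi_circle_0:
  assumes "0 < l" "0 < a + 2 * l" "0 < b + 2 * l"
  shows "isCont (Phi_circle a b l) 0"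
proof -
  have "eventually (\<lambda>s. s \<in> {s. 0 < a + 2 * l * cos s \<and> 0 < b + 2 * l * cos s}) (nhds 0)"
    using assms by (intro eventually_nhds_in_open)
      (auto intro!: open_Collect_conj open_Collect_less continuous_intros)
  then have "eventually (\<lambda>s. Phi_circle a b l s = Phi_circle_regular a b l s) (nhds 0)"
    by eventually_elim (simp add: Phi_circle_split[OF \<open>0 < l\<close>])
  moreover have "isCont (Phi_circle_regular a b l) 0"
    using assms by (intro isCont_Phi_circle_regular) auto
  ultimately show ?thesis
    using isCont_cong by blast
qed

lemma isCont_symmetric_difference_tendsto_0:
  fixes g :: "real \<Rightarrow> 'a :: real_normed_vector"
  assumes "isCont g p"
  shows "((\<lambda>e. g (p + e) - g (p - e)) \<longlongrightarrow> 0) (at_right 0)"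
proof -
  have "((\<lambda>e. g (p + e)) \<longlongrightarrow> g p) (at_right 0)" "((\<lambda>e. g (p - e)) \<longlongrightarrow> g p) (at_right 0)"
    by (auto intro!: isCont_tendsto_compose[OF assms] tendsto_eq_intros)
  then show ?thesis
    using tendsto_diff by fastforce
qed

lemma Phi_circle_jump_pi:
  assumes "0 < l" "b < 2 * l" "2 * l < a"
  shows "((\<lambda>e. Phi_circle a b l (pi + e) - Phi_circle a b l (pi - e)) \<longlongrightarrow> - 2 * pi) (at_right 0)"
proof -
  have "((\<lambda>e. b - 2 * l * cos e) \<longlongrightarrow> b - 2 * l) (at_right 0)"
    by (auto intro!: tendsto_eq_intros)
  then have "eventually (\<lambda>e. b - 2 * l * cos e < 0) (at_right 0)"
    using assms by (intro order_tendstoD(2)) auto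
  moreover have "eventually (\<lambda>e::real. 0 < e \<and> e < pi) (at_right 0)"
    using eventually_at_right_real[OF pi_gt_zero] by simp
  ultimately have "eventually (\<lambda>e. 0 < e \<and> e < pi \<and> b - 2 * l * cos e < 0) (at_right 0)"
    by eventually_elim simp
  then have "eventually (\<lambda>e. Phi_circle a b l (pi + e) - Phi_circle a b l (pi - e)
      = - 2 * pi + (Phi_circle_regular a b l (pi + e) - Phi_circle_regular a b l (pi - e))) (at_right 0)"
  proof eventually_elim
    case (elim e)
    have "2 * l * cos e \<le> 2 * l"
      using assms by (simp add: mult_left_le)
    then have "a - 2 * l * cos e > 0"
      using assms by linarith
    moreover have "sin e > 0" using elim sin_gt_zero by simp
    ultimately show ?case
      using elim by (simp add: Phi_circle_split[OF \<open>0 < l\<close>] algebra_simps)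
  qed
  moreover have "((\<lambda>e. - 2 * pi + (Phi_circle_regular a b l (pi + e) - Phi_circle_regular a b l (pi - e)))
      \<longlongrightarrow> - 2 * pi + 0) (at_right 0)"
    using assms isCont_Phi_circle_regular[of a l pi b]
    by (intro tendsto_add tendsto_const isCont_symmetric_difference_tendsto_0) auto
  ultimately show ?thesis
    by (simp add: tendsto_cong)
qed

lemma jump_points_Phi_circle:
  assumes "- 2 * l < b" "b < 2 * l" "2 * l < a"
  shows "jump_points (Phi_circle a b l) = {pi}"
proof -
  have "0 < l" using assms by simp
  have "\<not> isCont (Phi_circle a b l) pi"
    using Phi_circle_jump_pi[OF \<open>0 < l\<close> assms(2,3)] isCont_symmetric_difference_tendsto_0
      tendsto_unique[OF trivial_limit_at_right_real] by fastforce
  moreover have "p = pi" if "0 \<le> p" "p < 2 * pi" "\<not> isCont (Phi_circle a b l) p" for p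
  proof -
    have "sin p = 0"
      using isCont_Phi_circle[OF \<open>0 < l\<close>] that(3) by blast
    moreover have "p \<noteq> 0"
      using isCont_Phi_circle_0[OF \<open>0 < l\<close>] assms that(3) by force
    ultimately show "p = pi"
      using sin_eq_0_pi[of "p - pi"] that(1,2) by (auto simp: sin_diff)
  qed
  ultimately show ?thesis
    unfolding jump_points_def by auto
qed

theorem mainTheorem13:
  fixes r :: real
  assumes "r > 0"
  shows "\<exists>l0>0. \<forall>l. 0 < l \<and> l < l0 \<longrightarrow>
           (let g = (\<lambda>s. case Gamma l s of (j, h) \<Rightarrow> Phi_rel r j h) in
              finite (jump_points g) \<and>
              (\<forall>p\<in>jump_points g. (\<exists>d. ((\<lambda>e. g (p + e) - g (p - e)) \<longlongrightarrow> d) (at_right 0))) \<and>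
              var_loop g = 2 * pi)"
proof (intro exI[of _ r] conjI allI impI)
  show "r > 0" by fact
  fix l :: real
  assume "0 < l \<and> l < r"
  then have l: "0 < l" "l < r" by auto
  have g: "(\<lambda>s. case Gamma l s of (j, h) \<Rightarrow> Phi_rel r j h) = Phi_circle (W_exit r l) (W_entry r l) l"
  proof
    fix s
    have "(l * cos s)\<^sup>2 + (l * sin s)\<^sup>2 = l\<^sup>2"
      by (simp add: power_mult_distrib flip: distrib_left)
    then show "(case Gamma l s of (j, h) \<Rightarrow> Phi_rel r j h) = Phi_circle (W_exit r l) (W_entry r l) l s"
      using Phi_rel_eq[OF _ l] by (simp add: Gamma_def Phi_circle_def mult.assoc)
  qed
  have levels: "- 2 * l < W_entry r l" "W_entry r l < 2 * l" "2 * l < W_exit r l"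
    using W_entry_exit[OF l] l by auto
  have jump: "((\<lambda>e. Phi_circle (W_exit r l) (W_entry r l) l (pi + e)
      - Phi_circle (W_exit r l) (W_entry r l) l (pi - e)) \<longlongrightarrow> - 2 * pi) (at_right 0)"
    using Phi_circle_jump_pi[OF l(1) levels(2,3)] .
  then have "jump (Phi_circle (W_exit r l) (W_entry r l) l) pi = - 2 * pi"
    unfolding jump_def by (intro tendsto_Lim) simp_all
  then show "let g = (\<lambda>s. case Gamma l s of (j, h) \<Rightarrow> Phi_rel r j h) in
              finite (jump_points g) \<and>
              (\<forall>p\<in>jump_points g. (\<exists>d. ((\<lambda>e. g (p + e) - g (p - e)) \<longlongrightarrow> d) (at_right 0))) \<and>
              var_loop g = 2 * pi"
    unfolding Let_def g using jump jump_points_Phi_circle[OF levels] by (auto simp: var_loop_def)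
qed

end
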